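(* Let $0<c<b<a$ and let $\omega$ be the frequency map of the billiard inside $Q=\{x^2/a+y^2/b+z^2/c=1\}$. Let $\kappa^G=(\kappa^G_1,\kappa^G_2):(c,b)\cup(b,a)\to\mathbb{R}_+^2$ be the function such that $\omega(\lambda_1,\lambda_2)=\kappa^G(\lambda_2)\lambda_1^{1/2}+O(\lambda_1^{3/2})$ as $\lambda_1\to0^+$. For $\lambda\in(c,b)\cup(b,a)$ let $T^G(s)=-s(\lambda-s)(c-s)(b-s)(a-s)$ and $\rho^G(\lambda)=\dfrac{\int_c^{\min(b,\lambda)}s\,ds/\sqrt{T^G(s)}}{\int_{\max(b,\lambda)}^a s\,ds/\sqrt{T^G(s)}}$. Then $\rho^G=\kappa^G_2/\kappa^G_1$. Thus $\omega_2(\lambda_1,\lambda_2)/\omega_1(\lambda_1,\lambda_2)=\rho^G(\lambda_2)+O(\lambda_1)$ as $\lambda_1\to0^+$.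
   Context: Frequency map: for $\lambda_1\in(0,c)$ and $\lambda_2\in(c,b)\cup(b,a)$, order $\{a,b,c,\lambda_1,\lambda_2\}=\{c_1<\dots<c_5\}$, $c_0=0$, $T(s)=\prod_{k=1}^5(c_k-s)$, $K_{ij}=\int_{c_{2j}}^{c_{2j+1}}s^i ds/\sqrt{T(s)}$ ($i=0,1$, $j=0,1,2$), $K_j=(K_{0j},K_{1j})^t$; $\omega(\lambda_1,\lambda_2)$ is the unique solution of $K_0-2\omega_1K_1+2\omega_2K_2=0$. $\rho^G$ is the rotation number of geodesics on $Q$ oscillating between the curvature lines $Q\cap Q_\lambda$. *)

theory Defs
  imports "HOL-Analysis.Analysis" "HOL-Library.Landau_Symbols"
begin

definition freq_nodes :: "real \<Rightarrow> real \<Rightarrow> real \<Rightarrow> real \<Rightarrow> real \<Rightarrow> real list" where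
  "freq_nodes a b c l1 l2 = 0 # sort [a, b, c, l1, l2]"

definition freq_T :: "real \<Rightarrow> real \<Rightarrow> real \<Rightarrow> real \<Rightarrow> real \<Rightarrow> real \<Rightarrow> real" where
  "freq_T a b c l1 l2 s = (\<Prod>k\<in>{1..5::nat}. (freq_nodes a b c l1 l2 ! k - s))"

definition freq_K :: "real \<Rightarrow> real \<Rightarrow> real \<Rightarrow> real \<Rightarrow> real \<Rightarrow> nat \<Rightarrow> real \<times> real" where
  "freq_K a b c l1 l2 j =
     (let cs = freq_nodes a b c l1 l2; T = freq_T a b c l1 l2 in
      (integral {cs ! (2*j) .. cs ! (2*j+1)} (\<lambda>s. s ^ 0 / sqrt (T s)),
       integral {cs ! (2*j) .. cs ! (2*j+1)} (\<lambda>s. s ^ 1 / sqrt (T s))))"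

definition freq_map :: "real \<Rightarrow> real \<Rightarrow> real \<Rightarrow> real \<Rightarrow> real \<Rightarrow> real \<times> real" where
  "freq_map a b c l1 l2 =
     (THE w. freq_K a b c l1 l2 0 - (2 * fst w) *\<^sub>R freq_K a b c l1 l2 1
             + (2 * snd w) *\<^sub>R freq_K a b c l1 l2 2 = 0)"

definition TG :: "real \<Rightarrow> real \<Rightarrow> real \<Rightarrow> real \<Rightarrow> real \<Rightarrow> real" where
  "TG a b c l s = - s * (l - s) * (c - s) * (b - s) * (a - s)"

definition rhoG :: "real \<Rightarrow> real \<Rightarrow> real \<Rightarrow> real \<Rightarrow> real" where
  "rhoG a b c l =
     integral {c .. min b l} (\<lambda>s. s / sqrt (TG a b c l s)) /
     integral {max b l .. a} (\<lambda>s. s / sqrt (TG a b c l s))"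

end

theory Submission
  imports Defs "HOL-Real_Asymp.Real_Asymp"
begin

text \<open>
  For small \<open>e = \<lambda>\<^sub>1\<close> the nodes are \<open>0 < e < c < min b \<lambda> < max b \<lambda> < a\<close>, and the second
  component of the linear system defining \<open>\<omega>\<close> reads
  \<open>\<integral>\<^sub>0\<^sup>e s / \<surd>T = 2 \<omega>\<^sub>1 P(e) - 2 \<omega>\<^sub>2 Q(e)\<close>, where \<open>P\<close> and \<open>Q\<close> are the first moments of
  \<open>1 / \<surd>T\<close> over the bands \<open>[c, min b \<lambda>]\<close> and \<open>[max b \<lambda>, a]\<close>. The left side is \<open>O(e powr (3/2))\<close>,
  and \<open>P(e) \<rightarrow> P(0)\<close>, \<open>Q(e) \<rightarrow> Q(0)\<close> because \<open>T\<^sub>e(s) = (s - e) / s * T\<^sub>0(s)\<close>. Dividing by \<open>\<surd>e\<close>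
  and letting \<open>e \<rightarrow> 0\<close> gives \<open>\<kappa>\<^sub>1 P(0) = \<kappa>\<^sub>2 Q(0)\<close>, and \<open>P(0) / Q(0)\<close> is \<open>\<rho>\<^sup>G(\<lambda>)\<close>. The
  \<open>O(\<lambda>\<^sub>1)\<close> estimate for \<open>\<omega>\<^sub>2 / \<omega>\<^sub>1\<close> follows from the two expansions alone. The system is
  uniquely solvable: the bands are separated by the gap \<open>(min b \<lambda>, max b \<lambda>)\<close>, so the mean of
  \<open>s\<close> against \<open>1 / \<surd>T\<close> is smaller on the first band than on the second, which makes the
  determinant positive.
\<close>

lemma has_integral_inverse_sqrt_left:
  fixes \<alpha> \<beta> :: real
  assumes "\<alpha> < \<beta>"
  shows "((\<lambda>s. 1 / sqrt (s - \<alpha>)) has_integral 2 * sqrt (\<beta> - \<alpha>)) {\<alpha>..\<beta>}"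
proof -
  have "((\<lambda>s. 1 / sqrt (s - \<alpha>)) has_integral 2 * sqrt (\<beta> - \<alpha>) - 2 * sqrt (\<alpha> - \<alpha>)) {\<alpha>..\<beta>}"
  proof (rule fundamental_theorem_of_calculus_interior)
    show "continuous_on {\<alpha>..\<beta>} (\<lambda>s. 2 * sqrt (s - \<alpha>))" by (intro continuous_intros)
    fix x assume "x \<in> {\<alpha><..<\<beta>}"
    then show "((\<lambda>s. 2 * sqrt (s - \<alpha>)) has_vector_derivative 1 / sqrt (x - \<alpha>)) (at x)"
      unfolding has_real_derivative_iff_has_vector_derivative[symmetric]
      by (auto intro!: derivative_eq_intros simp: field_simps)
  qed (use assms in auto)
  then show ?thesis by simp
qed

lemma has_integral_inverse_sqrt_right:
  fixes \<alpha> \<beta> :: real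
  assumes "\<alpha> < \<beta>"
  shows "((\<lambda>s. 1 / sqrt (\<beta> - s)) has_integral 2 * sqrt (\<beta> - \<alpha>)) {\<alpha>..\<beta>}"
proof -
  have "((\<lambda>s. 1 / sqrt (\<beta> - s)) has_integral - 2 * sqrt (\<beta> - \<beta>) - (- 2 * sqrt (\<beta> - \<alpha>))) {\<alpha>..\<beta>}"
  proof (rule fundamental_theorem_of_calculus_interior)
    show "continuous_on {\<alpha>..\<beta>} (\<lambda>s. - 2 * sqrt (\<beta> - s))" by (intro continuous_intros)
    fix x assume "x \<in> {\<alpha><..<\<beta>}"
    then show "((\<lambda>s. - 2 * sqrt (\<beta> - s)) has_vector_derivative 1 / sqrt (\<beta> - x)) (at x)"
      unfolding has_real_derivative_iff_has_vector_derivative[symmetric]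
      by (auto intro!: derivative_eq_intros simp: field_simps)
  qed (use assms in auto)
  then show ?thesis by simp
qed

lemma integrable_dominated_by_inverse_sqrt_endpoints:
  fixes f :: "real \<Rightarrow> real"
  assumes "\<alpha> < \<beta>" and cont: "continuous_on {\<alpha><..<\<beta>} f"
    and bound: "\<And>s. s \<in> {\<alpha><..<\<beta>} \<Longrightarrow> \<bar>f s\<bar> \<le> B * (1 / sqrt (s - \<alpha>) + 1 / sqrt (\<beta> - s))"
  shows "f integrable_on {\<alpha>..\<beta>}"
    and "\<bar>integral {\<alpha>..\<beta>} f\<bar> \<le> 4 * B * sqrt (\<beta> - \<alpha>)"
proof -
  have dom: "((\<lambda>s. B * (1 / sqrt (s - \<alpha>) + 1 / sqrt (\<beta> - s))) has_integral 4 * B * sqrt (\<beta> - \<alpha>)) {\<alpha><..<\<beta>}"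
    using has_integral_mult_right[OF has_integral_add[OF has_integral_inverse_sqrt_left[OF \<open>\<alpha> < \<beta>\<close>]
          has_integral_inverse_sqrt_right[OF \<open>\<alpha> < \<beta>\<close>]], of B]
    by (simp add: has_integral_Icc_iff_Ioo[symmetric] mult_ac)
  then have "f integrable_on {\<alpha><..<\<beta>}"
    using measurable_bounded_by_integrable_imp_integrable[OF continuous_imp_measurable_on_sets_lebesgue[OF cont]]
      bound by (auto simp: has_integral_integrable)
  then show "f integrable_on {\<alpha>..\<beta>}"
    by (simp add: integrable_on_open_interval_real)
  have "norm (integral {\<alpha><..<\<beta>} f) \<le> 4 * B * sqrt (\<beta> - \<alpha>)"
    using integral_norm_bound_integral[OF \<open>f integrable_on {\<alpha><..<\<beta>}\<close> has_integral_integrable[OF dom]]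
      bound integral_unique[OF dom] by auto
  then show "\<bar>integral {\<alpha>..\<beta>} f\<bar> \<le> 4 * B * sqrt (\<beta> - \<alpha>)"
    by (simp add: integral_open_interval_real)
qed

lemma inverse_sqrt_mult_le:
  fixes x y :: real
  assumes "0 < x" "0 < y"
  shows "1 / sqrt (x * y) \<le> sqrt (2 / (x + y)) * (1 / sqrt x + 1 / sqrt y)"
proof -
  have *: "1 / sqrt (u * v) \<le> sqrt (2 / (u + v)) * (1 / sqrt u + 1 / sqrt v)"
    if "0 < u" "u \<le> v" for u v :: real
  proof -
    have "1 / sqrt v \<le> 1 / sqrt ((u + v) / 2)"
      using that by (intro divide_left_mono real_sqrt_le_mono) auto
    then have "1 / sqrt v \<le> sqrt (2 / (u + v))"
      by (simp add: real_sqrt_divide)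
    then have "1 / sqrt u * (1 / sqrt v) \<le> 1 / sqrt u * sqrt (2 / (u + v))"
      using that by (intro mult_left_mono) auto
    then have "1 / sqrt (u * v) \<le> 1 / sqrt u * sqrt (2 / (u + v))"
      by (simp add: real_sqrt_mult)
    also have "\<dots> \<le> sqrt (2 / (u + v)) * (1 / sqrt u + 1 / sqrt v)"
      using that by (simp add: algebra_simps)
    finally show ?thesis .
  qed
  show ?thesis
    using *[of x y] *[of y x] assms by (cases "x \<le> y") (auto simp: mult.commute add.commute)
qed

lemma integrable_divide_sqrt_simple_zeros:
  fixes g h :: "real \<Rightarrow> real"
  assumes "\<alpha> < \<beta>" and g: "continuous_on {\<alpha>..\<beta>} g" and h: "continuous_on {\<alpha>..\<beta>} h"
    and h_pos: "\<And>s. s \<in> {\<alpha>..\<beta>} \<Longrightarrow> 0 < h s"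
  shows "(\<lambda>s. g s / sqrt ((s - \<alpha>) * (\<beta> - s) * h s)) integrable_on {\<alpha>..\<beta>}"
proof -
  have ne: "{\<alpha>..\<beta>} \<noteq> {}"
    using \<open>\<alpha> < \<beta>\<close> by simp
  obtain s0 where s0: "s0 \<in> {\<alpha>..\<beta>}" "\<And>s. s \<in> {\<alpha>..\<beta>} \<Longrightarrow> h s0 \<le> h s"
    using continuous_attains_inf[OF compact_Icc ne h] by blast
  define m where "m = h s0"
  have m: "0 < m" "\<And>s. s \<in> {\<alpha>..\<beta>} \<Longrightarrow> m \<le> h s"
    using s0 h_pos by (auto simp: m_def)
  obtain H where H: "\<And>s. s \<in> {\<alpha>..\<beta>} \<Longrightarrow> \<bar>g s\<bar> \<le> H"
    using continuous_attains_sup[OF compact_Icc ne continuous_on_rabs[OF g]] by blast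
  show ?thesis
  proof (rule integrable_dominated_by_inverse_sqrt_endpoints(1)[OF \<open>\<alpha> < \<beta>\<close>])
    have "continuous_on {\<alpha><..<\<beta>} g" "continuous_on {\<alpha><..<\<beta>} h"
      using g h by (auto elim: continuous_on_subset)
    moreover have "\<forall>s\<in>{\<alpha><..<\<beta>}. sqrt ((s - \<alpha>) * (\<beta> - s) * h s) \<noteq> 0"
      using h_pos by (auto intro!: mult_pos_pos simp: less_imp_neq[symmetric])
    ultimately show "continuous_on {\<alpha><..<\<beta>} (\<lambda>s. g s / sqrt ((s - \<alpha>) * (\<beta> - s) * h s))"
      by (intro continuous_intros)
  next
    fix s assume s: "s \<in> {\<alpha><..<\<beta>}"
    then have pos: "0 < s - \<alpha>" "0 < \<beta> - s" by auto
    have "sqrt m * sqrt ((s - \<alpha>) * (\<beta> - s)) \<le> sqrt ((s - \<alpha>) * (\<beta> - s) * h s)"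
      using m(2)[of s] s pos by (simp add: real_sqrt_mult[symmetric] mult.commute)
    then have "\<bar>g s / sqrt ((s - \<alpha>) * (\<beta> - s) * h s)\<bar> \<le> H / (sqrt m * sqrt ((s - \<alpha>) * (\<beta> - s)))"
      using H[of s] s pos m(1) by (auto simp: abs_divide intro!: frac_le)
    also have "\<dots> = H / sqrt m * (1 / sqrt ((s - \<alpha>) * (\<beta> - s)))"
      by simp
    also have "\<dots> \<le> H / sqrt m * (sqrt (2 / (\<beta> - \<alpha>)) * (1 / sqrt (s - \<alpha>) + 1 / sqrt (\<beta> - s)))"
      using inverse_sqrt_mult_le[OF pos] H[of s] s m(1) by (intro mult_left_mono) auto
    finally show "\<bar>g s / sqrt ((s - \<alpha>) * (\<beta> - s) * h s)\<bar>
        \<le> H / sqrt m * sqrt (2 / (\<beta> - \<alpha>)) * (1 / sqrt (s - \<alpha>) + 1 / sqrt (\<beta> - s))"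
      by (simp add: mult_ac)
  qed
qed

lemma integral_inverse_sqrt_simple_zeros_pos:
  fixes h :: "real \<Rightarrow> real"
  assumes "\<alpha> < \<beta>" and h: "continuous_on {\<alpha>..\<beta>} h"
    and h_pos: "\<And>s. s \<in> {\<alpha>..\<beta>} \<Longrightarrow> 0 < h s"
  shows "0 < integral {\<alpha>..\<beta>} (\<lambda>s. 1 / sqrt ((s - \<alpha>) * (\<beta> - s) * h s))"
proof -
  obtain M where M: "\<And>s. s \<in> {\<alpha>..\<beta>} \<Longrightarrow> h s \<le> M"
    using continuous_attains_sup[OF compact_Icc _ h] \<open>\<alpha> < \<beta>\<close> by fastforce
  have "0 < M"
    using M[of \<alpha>] h_pos[of \<alpha>] \<open>\<alpha> < \<beta>\<close> by simp
  have "integral {\<alpha><..<\<beta>} (\<lambda>s. 1 / ((\<beta> - \<alpha>) * sqrt M))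
      \<le> integral {\<alpha><..<\<beta>} (\<lambda>s. 1 / sqrt ((s - \<alpha>) * (\<beta> - s) * h s))"
  proof (rule integral_le)
    show "(\<lambda>s. 1 / sqrt ((s - \<alpha>) * (\<beta> - s) * h s)) integrable_on {\<alpha><..<\<beta>}"
      using integrable_divide_sqrt_simple_zeros[OF \<open>\<alpha> < \<beta>\<close> continuous_on_const h h_pos]
      by (simp add: integrable_on_open_interval_real)
  next
    fix s assume s: "s \<in> {\<alpha><..<\<beta>}"
    have "(s - \<alpha>) * (\<beta> - s) * h s \<le> (\<beta> - \<alpha>)\<^sup>2 * M"
    proof -
      have "(s - \<alpha>) * (\<beta> - s) \<le> (\<beta> - \<alpha>)\<^sup>2"
        using s by (simp add: power2_eq_square mult_mono)
      then show ?thesis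
        using s M[of s] h_pos[of s] by (intro mult_mono) auto
    qed
    then have "sqrt ((s - \<alpha>) * (\<beta> - s) * h s) \<le> sqrt ((\<beta> - \<alpha>)\<^sup>2) * sqrt M"
      by (metis real_sqrt_le_mono real_sqrt_mult)
    then have "sqrt ((s - \<alpha>) * (\<beta> - s) * h s) \<le> (\<beta> - \<alpha>) * sqrt M"
      using \<open>\<alpha> < \<beta>\<close> by simp
    then show "1 / ((\<beta> - \<alpha>) * sqrt M) \<le> 1 / sqrt ((s - \<alpha>) * (\<beta> - s) * h s)"
      using s h_pos[of s] \<open>0 < M\<close> by (intro divide_left_mono) auto
  qed (simp add: integrable_on_open_interval_real integrable_const_ivl)
  moreover have "0 < integral {\<alpha><..<\<beta>} (\<lambda>s. 1 / ((\<beta> - \<alpha>) * sqrt M))"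
    using \<open>\<alpha> < \<beta>\<close> \<open>0 < M\<close> unfolding integral_open_interval_real[symmetric] by simp
  ultimately show ?thesis
    unfolding integral_open_interval_real by linarith
qed

lemma integral_first_moment_bounds:
  fixes f :: "real \<Rightarrow> real"
  assumes f: "f integrable_on {\<alpha>..\<beta>}" and sf: "(\<lambda>s. s * f s) integrable_on {\<alpha>..\<beta>}"
    and f_nonneg: "\<And>s. s \<in> {\<alpha>..\<beta>} \<Longrightarrow> 0 \<le> f s"
  shows "\<alpha> * integral {\<alpha>..\<beta>} f \<le> integral {\<alpha>..\<beta>} (\<lambda>s. s * f s)"
    and "integral {\<alpha>..\<beta>} (\<lambda>s. s * f s) \<le> \<beta> * integral {\<alpha>..\<beta>} f"
proof -
  have "integral {\<alpha>..\<beta>} (\<lambda>s. \<alpha> * f s) \<le> integral {\<alpha>..\<beta>} (\<lambda>s. s * f s)"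
    using integrable_on_cmult_left[OF f, of \<alpha>] sf f_nonneg by (intro integral_le) (auto intro: mult_right_mono)
  then show "\<alpha> * integral {\<alpha>..\<beta>} f \<le> integral {\<alpha>..\<beta>} (\<lambda>s. s * f s)"
    by simp
  have "integral {\<alpha>..\<beta>} (\<lambda>s. s * f s) \<le> integral {\<alpha>..\<beta>} (\<lambda>s. \<beta> * f s)"
    using integrable_on_cmult_left[OF f, of \<beta>] sf f_nonneg by (intro integral_le) (auto intro: mult_right_mono)
  then show "integral {\<alpha>..\<beta>} (\<lambda>s. s * f s) \<le> \<beta> * integral {\<alpha>..\<beta>} f"
    by simp
qed

lemma sqrt_shift_ratio_bounds:
  fixes \<alpha> e s :: real
  assumes "0 < \<alpha>" "\<alpha> \<le> s" "0 \<le> e" "e \<le> \<alpha> / 2"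
  shows "1 \<le> sqrt s / sqrt (s - e)" and "sqrt s / sqrt (s - e) \<le> 1 + e / \<alpha>"
proof -
  define x y where "x = sqrt (s - e)" and "y = sqrt s"
  have "0 < x" "x \<le> y"
    using assms by (auto simp: x_def y_def)
  then show "1 \<le> sqrt s / sqrt (s - e)"
    by (simp flip: x_def y_def)
  have "x\<^sup>2 = s - e" "y\<^sup>2 = s"
    using assms by (auto simp: x_def y_def)
  then have "(y - x) * (x + y) = e"
    by (simp add: algebra_simps power2_eq_square)
  then have "y - x = e / (x + y)"
    using \<open>0 < x\<close> \<open>x \<le> y\<close> by (simp add: eq_divide_eq)
  have "y / x - 1 = (y - x) / x"
    using \<open>0 < x\<close> by (simp add: field_simps)
  also have "\<dots> = e / (x * (x + y))"
    using \<open>y - x = e / (x + y)\<close> by (simp add: mult.commute)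
  also have "\<dots> \<le> e / (2 * x\<^sup>2)"
    using \<open>0 < x\<close> \<open>x \<le> y\<close> assms(3) by (intro divide_left_mono) (auto simp: power2_eq_square)
  also have "\<dots> \<le> e / \<alpha>"
    using \<open>x\<^sup>2 = s - e\<close> assms by (intro divide_left_mono) auto
  finally show "sqrt s / sqrt (s - e) \<le> 1 + e / \<alpha>"
    by (simp add: x_def y_def)
qed

lemma integral_mult_sqrt_shift_bounds:
  fixes f :: "real \<Rightarrow> real"
  assumes "0 < \<alpha>" "0 \<le> e" "e \<le> \<alpha> / 2"
    and f: "f integrable_on {\<alpha>..\<beta>}"
    and f_shift: "(\<lambda>s. f s * (sqrt s / sqrt (s - e))) integrable_on {\<alpha>..\<beta>}"
    and f_nonneg: "\<And>s. s \<in> {\<alpha>..\<beta>} \<Longrightarrow> 0 \<le> f s"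
  shows "integral {\<alpha>..\<beta>} f \<le> integral {\<alpha>..\<beta>} (\<lambda>s. f s * (sqrt s / sqrt (s - e)))"
    and "integral {\<alpha>..\<beta>} (\<lambda>s. f s * (sqrt s / sqrt (s - e))) \<le> (1 + e / \<alpha>) * integral {\<alpha>..\<beta>} f"
proof -
  note ratio = sqrt_shift_ratio_bounds[OF \<open>0 < \<alpha>\<close> _ \<open>0 \<le> e\<close> \<open>e \<le> \<alpha> / 2\<close>]
  show "integral {\<alpha>..\<beta>} f \<le> integral {\<alpha>..\<beta>} (\<lambda>s. f s * (sqrt s / sqrt (s - e)))"
  proof (rule integral_le[OF f f_shift])
    fix s assume "s \<in> {\<alpha>..\<beta>}"
    then show "f s \<le> f s * (sqrt s / sqrt (s - e))"
      using mult_left_mono[OF ratio(1) f_nonneg, of s s] by simp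
  qed
  have "integral {\<alpha>..\<beta>} (\<lambda>s. f s * (sqrt s / sqrt (s - e))) \<le> integral {\<alpha>..\<beta>} (\<lambda>s. (1 + e / \<alpha>) * f s)"
  proof (rule integral_le[OF f_shift])
    show "(\<lambda>s. (1 + e / \<alpha>) * f s) integrable_on {\<alpha>..\<beta>}"
      using integrable_on_cmult_left[OF f, of "1 + e / \<alpha>"] by simp
    fix s assume "s \<in> {\<alpha>..\<beta>}"
    then show "f s * (sqrt s / sqrt (s - e)) \<le> (1 + e / \<alpha>) * f s"
      using mult_left_mono[OF ratio(2) f_nonneg, of s s] by (simp add: mult.commute)
  qed
  then show "integral {\<alpha>..\<beta>} (\<lambda>s. f s * (sqrt s / sqrt (s - e))) \<le> (1 + e / \<alpha>) * integral {\<alpha>..\<beta>} f"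
    by simp
qed

lemma tendsto_integral_mult_sqrt_shift:
  fixes f :: "real \<Rightarrow> real"
  assumes "0 < \<alpha>" and f: "f integrable_on {\<alpha>..\<beta>}"
    and f_shift: "\<forall>\<^sub>F e in at_right 0. (\<lambda>s. f s * (sqrt s / sqrt (s - e))) integrable_on {\<alpha>..\<beta>}"
    and f_nonneg: "\<And>s. s \<in> {\<alpha>..\<beta>} \<Longrightarrow> 0 \<le> f s"
  shows "((\<lambda>e. integral {\<alpha>..\<beta>} (\<lambda>s. f s * (sqrt s / sqrt (s - e)))) \<longlongrightarrow> integral {\<alpha>..\<beta>} f) (at_right 0)"
proof (rule tendsto_sandwich)
  have "\<forall>\<^sub>F e in at_right 0. 0 < e \<and> e \<le> \<alpha> / 2"
    using \<open>0 < \<alpha>\<close> by (auto simp: eventually_at_right_field intro!: exI[of _ "\<alpha> / 2"])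
  with f_shift have small: "\<forall>\<^sub>F e in at_right 0. 0 < e \<and> e \<le> \<alpha> / 2 \<and>
      (\<lambda>s. f s * (sqrt s / sqrt (s - e))) integrable_on {\<alpha>..\<beta>}"
    by eventually_elim auto
  note bounds = integral_mult_sqrt_shift_bounds[OF \<open>0 < \<alpha>\<close> _ _ f _ f_nonneg]
  show "\<forall>\<^sub>F e in at_right 0. integral {\<alpha>..\<beta>} f \<le> integral {\<alpha>..\<beta>} (\<lambda>s. f s * (sqrt s / sqrt (s - e)))"
    using small by eventually_elim (use bounds(1) in auto)
  show "\<forall>\<^sub>F e in at_right 0. integral {\<alpha>..\<beta>} (\<lambda>s. f s * (sqrt s / sqrt (s - e))) \<le> (1 + e / \<alpha>) * integral {\<alpha>..\<beta>} f"
    using small by eventually_elim (use bounds(2) in auto)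
  have "((\<lambda>e. (1 + e / \<alpha>) * integral {\<alpha>..\<beta>} f) \<longlongrightarrow> (1 + 0 / \<alpha>) * integral {\<alpha>..\<beta>} f) (at_right 0)"
    using \<open>0 < \<alpha>\<close> by (intro tendsto_intros) auto
  then show "((\<lambda>e. (1 + e / \<alpha>) * integral {\<alpha>..\<beta>} f) \<longlongrightarrow> integral {\<alpha>..\<beta>} f) (at_right 0)"
    by simp
qed simp

lemma tendsto_divide_sqrt_zero_of_bigo:
  fixes f :: "real \<Rightarrow> real"
  assumes "f \<in> O[at_right 0](\<lambda>x. x powr (3/2))"
  shows "((\<lambda>x. f x / sqrt x) \<longlongrightarrow> 0) (at_right 0)"
proof -
  have "(\<lambda>x. x powr (3/2)) \<in> o[at_right 0](\<lambda>x. sqrt x)"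
    by real_asymp
  with assms have "f \<in> o[at_right 0](\<lambda>x. sqrt x)"
    by (rule landau_o.big_small_trans)
  then show ?thesis
    by (rule smalloD_tendsto)
qed

lemma tendsto_divide_sqrt_of_bigo:
  fixes f :: "real \<Rightarrow> real"
  assumes "(\<lambda>x. f x - k * x powr (1/2)) \<in> O[at_right 0](\<lambda>x. x powr (3/2))"
  shows "((\<lambda>x. f x / sqrt x) \<longlongrightarrow> k) (at_right 0)"
proof -
  have "((\<lambda>x. (f x - k * x powr (1/2)) / sqrt x + k) \<longlongrightarrow> 0 + k) (at_right 0)"
    by (intro tendsto_add tendsto_divide_sqrt_zero_of_bigo[OF assms] tendsto_const)
  moreover have "\<forall>\<^sub>F x in at_right 0. (f x - k * x powr (1/2)) / sqrt x + k = f x / sqrt x"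
    by (auto simp: eventually_at_right_field powr_half_sqrt field_simps intro!: exI[of _ 1])
  ultimately show ?thesis
    by (auto intro: Lim_transform_eventually)
qed

lemma coefficient_relation_of_sqrt_expansions:
  fixes w1 w2 A P Q :: "real \<Rightarrow> real"
  assumes w1: "(\<lambda>x. w1 x - k1 * x powr (1/2)) \<in> O[at_right 0](\<lambda>x. x powr (3/2))"
    and w2: "(\<lambda>x. w2 x - k2 * x powr (1/2)) \<in> O[at_right 0](\<lambda>x. x powr (3/2))"
    and A: "A \<in> O[at_right 0](\<lambda>x. x powr (3/2))"
    and P: "(P \<longlongrightarrow> p) (at_right 0)" and Q: "(Q \<longlongrightarrow> q) (at_right 0)"
    and eq: "\<forall>\<^sub>F x in at_right 0. A x = 2 * w1 x * P x - 2 * w2 x * Q x"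
  shows "k1 * p = k2 * q"
proof -
  let ?F = "\<lambda>x. 2 * (w1 x / sqrt x) * P x - 2 * (w2 x / sqrt x) * Q x"
  have "(?F \<longlongrightarrow> 2 * k1 * p - 2 * k2 * q) (at_right 0)"
    by (intro tendsto_intros tendsto_divide_sqrt_of_bigo w1 w2 P Q)
  moreover have "(?F \<longlongrightarrow> 0) (at_right 0)"
  proof (rule Lim_transform_eventually[OF tendsto_divide_sqrt_zero_of_bigo[OF A]])
    show "\<forall>\<^sub>F x in at_right 0. A x / sqrt x = ?F x"
      using eq by eventually_elim (simp add: diff_divide_distrib)
  qed
  ultimately have "2 * k1 * p - 2 * k2 * q = 0"
    by (rule tendsto_unique[OF trivial_limit_at_right_real])
  then show ?thesis
    by simp
qed

lemma bigo_quotient_of_sqrt_expansions: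
  fixes w1 w2 :: "real \<Rightarrow> real"
  assumes w1: "(\<lambda>x. w1 x - k1 * x powr (1/2)) \<in> O[at_right 0](\<lambda>x. x powr (3/2))"
    and w2: "(\<lambda>x. w2 x - k2 * x powr (1/2)) \<in> O[at_right 0](\<lambda>x. x powr (3/2))"
    and "k1 \<noteq> 0"
  shows "(\<lambda>x. w2 x / w1 x - k2 / k1) \<in> O[at_right 0](\<lambda>x. x)"
proof -
  have lim: "((\<lambda>x. w1 x / sqrt x) \<longlongrightarrow> k1) (at_right 0)"
    by (rule tendsto_divide_sqrt_of_bigo[OF w1])
  have pos: "\<forall>\<^sub>F x in at_right 0. 0 < (x::real)"
    by (rule eventually_at_right_less)
  have "(\<lambda>x. k1 * (w2 x - k2 * x powr (1/2)) - k2 * (w1 x - k1 * x powr (1/2)))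
      \<in> O[at_right 0](\<lambda>x. x powr (3/2))"
    using w1 w2 by (intro sum_in_bigo) auto
  then have "(\<lambda>x. k1 * w2 x - k2 * w1 x) \<in> O[at_right 0](\<lambda>x. x powr (3/2))"
    by (simp add: algebra_simps)
  then have "(\<lambda>x. (k1 * w2 x - k2 * w1 x) / sqrt x) \<in> O[at_right 0](\<lambda>x. x powr (3/2) / sqrt x)"
    using pos by (intro landau_o.big.divide_right) (auto elim: eventually_mono)
  also have "(\<lambda>x. x powr (3/2) / sqrt x) \<in> O[at_right 0](\<lambda>x. x)"
    by real_asymp
  finally have num: "(\<lambda>x. (k1 * w2 x - k2 * w1 x) / sqrt x) \<in> O[at_right 0](\<lambda>x. x)" .
  have "((\<lambda>x. 1 / (k1 * (w1 x / sqrt x))) \<longlongrightarrow> 1 / (k1 * k1)) (at_right 0)"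
    using \<open>k1 \<noteq> 0\<close> by (intro tendsto_intros lim) auto
  then have den: "(\<lambda>x. 1 / (k1 * (w1 x / sqrt x))) \<in> O[at_right 0](\<lambda>_. 1)"
    by (intro bigoI_tendsto[where c = "1 / (k1 * k1)"]) auto
  have "(\<lambda>x. (k1 * w2 x - k2 * w1 x) / sqrt x * (1 / (k1 * (w1 x / sqrt x)))) \<in> O[at_right 0](\<lambda>x. x)"
    using landau_o.big.mult[OF num den] by simp
  moreover have "\<forall>\<^sub>F x in at_right 0. w1 x / sqrt x \<noteq> 0"
    using tendsto_imp_eventually_ne[OF lim \<open>k1 \<noteq> 0\<close>] .
  then have "\<forall>\<^sub>F x in at_right 0.
      (k1 * w2 x - k2 * w1 x) / sqrt x * (1 / (k1 * (w1 x / sqrt x))) = w2 x / w1 x - k2 / k1"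
    using pos by eventually_elim (use \<open>k1 \<noteq> 0\<close> in \<open>auto simp: field_simps\<close>)
  ultimately show ?thesis
    by (rule landau_o.big.in_cong[THEN iffD1, rotated])
qed

lemma linear_system_the_solution:
  fixes u v w :: "real \<times> real"
  assumes det: "fst v * snd w - snd v * fst w \<noteq> 0"
  defines "z \<equiv> THE z. u - (2 * fst z) *\<^sub>R v + (2 * snd z) *\<^sub>R w = 0"
  shows "u - (2 * fst z) *\<^sub>R v + (2 * snd z) *\<^sub>R w = 0"
proof -
  obtain u0 u1 p0 p1 q0 q1 where uvw: "u = (u0, u1)" "v = (p0, p1)" "w = (q0, q1)"
    by (cases u, cases v, cases w) auto
  let ?P = "\<lambda>z::real \<times> real. u - (2 * fst z) *\<^sub>R v + (2 * snd z) *\<^sub>R w = 0"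
  have P_iff: "?P z \<longleftrightarrow> u0 - 2 * fst z * p0 + 2 * snd z * q0 = 0 \<and> u1 - 2 * fst z * p1 + 2 * snd z * q1 = 0"
    for z by (simp add: uvw prod_eq_iff)
  define D where "D = p0 * q1 - p1 * q0"
  have "D \<noteq> 0"
    using det by (simp add: uvw D_def)
  \<comment> \<open>Cramer's rule\<close>
  have ex: "?P ((u0 * q1 - q0 * u1) / (2 * D), (p1 * u0 - p0 * u1) / (2 * D))"
    using \<open>D \<noteq> 0\<close> unfolding P_iff by (simp add: D_def field_simps)
  have uniq: "z1 = z2" if "?P z1" "?P z2" for z1 z2
  proof -
    have "(fst z1 - fst z2) * p0 = (snd z1 - snd z2) * q0" "(fst z1 - fst z2) * p1 = (snd z1 - snd z2) * q1"
      using that unfolding P_iff by algebra+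
    then have "(fst z1 - fst z2) * D = 0" "(snd z1 - snd z2) * D = 0"
      unfolding D_def by algebra+
    then show "z1 = z2"
      using \<open>D \<noteq> 0\<close> by (simp add: prod_eq_iff)
  qed
  show ?thesis
    unfolding z_def by (rule theI[of ?P, OF ex]) (rule uniq[OF _ ex])
qed

text \<open>
  \<open>c2 < c3 < c4 < c5\<close> are the nodes \<open>c, min b \<lambda>, max b \<lambda>, a\<close>, and \<open>T e\<close> is the polynomial \<open>T\<close> of
  the frequency map with \<open>\<lambda>\<^sub>1 = e\<close>. The bands \<open>[c2, c3]\<close> and \<open>[c4, c5]\<close>, where \<open>T e\<close> is
  nonnegative with simple zeros at both ends, carry the integrals \<open>K\<^sub>1\<close> and \<open>K\<^sub>2\<close>.
\<close>

locale billiard_nodes =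
  fixes c2 c3 c4 c5 :: real
  assumes nodes_ordered: "0 < c2" "c2 < c3" "c3 < c4" "c4 < c5"
begin

definition T :: "real \<Rightarrow> real \<Rightarrow> real" where
  "T e s = (e - s) * (c2 - s) * (c3 - s) * (c4 - s) * (c5 - s)"

definition moment :: "real \<Rightarrow> real \<Rightarrow> nat \<Rightarrow> real \<Rightarrow> real" where
  "moment \<alpha> \<beta> i e = integral {\<alpha>..\<beta>} (\<lambda>s. s ^ i / sqrt (T e s))"

lemma T_band_factor:
  assumes band: "(\<alpha>, \<beta>) \<in> {(c2, c3), (c4, c5)}" and "e < c2"
  obtains h where "continuous_on {\<alpha>..\<beta>} h" "\<And>s. s \<in> {\<alpha>..\<beta>} \<Longrightarrow> 0 < h s"
    "\<And>s. T e s = (s - \<alpha>) * (\<beta> - s) * h s"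
proof -
  consider "\<alpha> = c2" "\<beta> = c3" | "\<alpha> = c4" "\<beta> = c5"
    using band by auto
  then show thesis
  proof cases
    case 1
    show thesis
    proof (rule that[of "\<lambda>s. (s - e) * (c4 - s) * (c5 - s)"])
      show "continuous_on {\<alpha>..\<beta>} (\<lambda>s. (s - e) * (c4 - s) * (c5 - s))"
        by (intro continuous_intros)
      show "0 < (s - e) * (c4 - s) * (c5 - s)" if "s \<in> {\<alpha>..\<beta>}" for s
        using that 1 nodes_ordered \<open>e < c2\<close> by auto
      show "T e s = (s - \<alpha>) * (\<beta> - s) * ((s - e) * (c4 - s) * (c5 - s))" for s
        unfolding T_def 1 by (simp add: algebra_simps)
    qed
  next
    case 2
    show thesis
    proof (rule that[of "\<lambda>s. (s - e) * (s - c2) * (s - c3)"])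
      show "continuous_on {\<alpha>..\<beta>} (\<lambda>s. (s - e) * (s - c2) * (s - c3))"
        by (intro continuous_intros)
      show "0 < (s - e) * (s - c2) * (s - c3)" if "s \<in> {\<alpha>..\<beta>}" for s
        using that 2 nodes_ordered \<open>e < c2\<close> by auto
      show "T e s = (s - \<alpha>) * (\<beta> - s) * ((s - e) * (s - c2) * (s - c3))" for s
        unfolding T_def 2 by (simp add: algebra_simps)
    qed
  qed
qed

lemma band_bounds:
  assumes "(\<alpha>, \<beta>) \<in> {(c2, c3), (c4, c5)}"
  shows "c2 \<le> \<alpha>" "\<alpha> < \<beta>"
  using assms nodes_ordered by auto

lemma moment_integrable:
  assumes band: "(\<alpha>, \<beta>) \<in> {(c2, c3), (c4, c5)}" and "e < c2"
  shows "(\<lambda>s. s ^ i / sqrt (T e s)) integrable_on {\<alpha>..\<beta>}"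
proof -
  obtain h where h: "continuous_on {\<alpha>..\<beta>} h" "\<And>s. s \<in> {\<alpha>..\<beta>} \<Longrightarrow> 0 < h s"
    and T: "\<And>s. T e s = (s - \<alpha>) * (\<beta> - s) * h s"
    using T_band_factor[OF band \<open>e < c2\<close>] by blast
  show ?thesis
    unfolding T by (intro integrable_divide_sqrt_simple_zeros band_bounds[OF band] h continuous_intros)
qed

lemma moment_zero_pos:
  assumes band: "(\<alpha>, \<beta>) \<in> {(c2, c3), (c4, c5)}"
  shows "0 < moment \<alpha> \<beta> 0 0"
proof -
  obtain h where h: "continuous_on {\<alpha>..\<beta>} h" "\<And>s. s \<in> {\<alpha>..\<beta>} \<Longrightarrow> 0 < h s"
    and T: "\<And>s. T 0 s = (s - \<alpha>) * (\<beta> - s) * h s"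
    using T_band_factor[OF band] nodes_ordered by blast
  show ?thesis
    unfolding moment_def T using integral_inverse_sqrt_simple_zeros_pos[OF band_bounds(2)[OF band] h] by simp
qed

lemma moment_integrand_nonneg:
  assumes band: "(\<alpha>, \<beta>) \<in> {(c2, c3), (c4, c5)}" and "e < c2" and "s \<in> {\<alpha>..\<beta>}"
  shows "0 \<le> s ^ i / sqrt (T e s)"
proof -
  obtain h where "continuous_on {\<alpha>..\<beta>} h" and h: "\<And>s. s \<in> {\<alpha>..\<beta>} \<Longrightarrow> 0 < h s"
    and T: "\<And>s. T e s = (s - \<alpha>) * (\<beta> - s) * h s"
    using T_band_factor[OF band \<open>e < c2\<close>] by blast
  show ?thesis
    using h[OF \<open>s \<in> {\<alpha>..\<beta>}\<close>] \<open>s \<in> {\<alpha>..\<beta>}\<close> band_bounds[OF band] nodes_ordered by (simp add: T)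
qed

lemma moment_first_bounds:
  assumes band: "(\<alpha>, \<beta>) \<in> {(c2, c3), (c4, c5)}" and "e < c2"
  shows "\<alpha> * moment \<alpha> \<beta> 0 e \<le> moment \<alpha> \<beta> 1 e" and "moment \<alpha> \<beta> 1 e \<le> \<beta> * moment \<alpha> \<beta> 0 e"
proof -
  have m0: "moment \<alpha> \<beta> 0 e = integral {\<alpha>..\<beta>} (\<lambda>s. 1 / sqrt (T e s))"
    and m1: "moment \<alpha> \<beta> 1 e = integral {\<alpha>..\<beta>} (\<lambda>s. s * (1 / sqrt (T e s)))"
    by (simp_all add: moment_def)
  have "(\<lambda>s. 1 / sqrt (T e s)) integrable_on {\<alpha>..\<beta>}"
    and "(\<lambda>s. s * (1 / sqrt (T e s))) integrable_on {\<alpha>..\<beta>}"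
    using moment_integrable[OF band \<open>e < c2\<close>, of 0] moment_integrable[OF band \<open>e < c2\<close>, of 1]
    by simp_all
  from integral_first_moment_bounds[OF this] moment_integrand_nonneg[OF band \<open>e < c2\<close>, of _ 0]
  show "\<alpha> * moment \<alpha> \<beta> 0 e \<le> moment \<alpha> \<beta> 1 e" and "moment \<alpha> \<beta> 1 e \<le> \<beta> * moment \<alpha> \<beta> 0 e"
    unfolding m0 m1 by simp_all
qed

lemma moment_one_zero_pos:
  assumes band: "(\<alpha>, \<beta>) \<in> {(c2, c3), (c4, c5)}"
  shows "0 < moment \<alpha> \<beta> 1 0"
proof -
  have "0 < \<alpha> * moment \<alpha> \<beta> 0 0"
    using moment_zero_pos[OF band] band_bounds[OF band] nodes_ordered by simp
  then show ?thesis
    using moment_first_bounds(1)[OF band] nodes_ordered by (meson order_less_le_trans)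
qed

lemma T_shift_integrand:
  assumes "0 \<le> e" "e < c2" "c2 \<le> s"
  shows "s ^ i / sqrt (T e s) = s ^ i / sqrt (T 0 s) * (sqrt s / sqrt (s - e))"
proof -
  have "T e s = (s - e) / s * T 0 s"
    using assms nodes_ordered by (simp add: T_def field_simps)
  then have "sqrt (T e s) = sqrt (s - e) / sqrt s * sqrt (T 0 s)"
    by (simp add: real_sqrt_mult real_sqrt_divide)
  moreover have "0 < sqrt (s - e)" "0 < sqrt s"
    using assms by auto
  ultimately show ?thesis
    unfolding \<open>sqrt (T e s) = sqrt (s - e) / sqrt s * sqrt (T 0 s)\<close>
    by (cases "T 0 s = 0") (auto simp: field_simps)
qed

lemma moment_eq_shift_integral:
  assumes band: "(\<alpha>, \<beta>) \<in> {(c2, c3), (c4, c5)}" and "0 \<le> e" "e < c2"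
  shows "moment \<alpha> \<beta> i e = integral {\<alpha>..\<beta>} (\<lambda>s. s ^ i / sqrt (T 0 s) * (sqrt s / sqrt (s - e)))"
    and "(\<lambda>s. s ^ i / sqrt (T 0 s) * (sqrt s / sqrt (s - e))) integrable_on {\<alpha>..\<beta>}"
proof -
  have eq: "s ^ i / sqrt (T e s) = s ^ i / sqrt (T 0 s) * (sqrt s / sqrt (s - e))" if "s \<in> {\<alpha>..\<beta>}" for s
    using T_shift_integrand[OF \<open>0 \<le> e\<close> \<open>e < c2\<close>] band_bounds[OF band] that by auto
  show "moment \<alpha> \<beta> i e = integral {\<alpha>..\<beta>} (\<lambda>s. s ^ i / sqrt (T 0 s) * (sqrt s / sqrt (s - e)))"
    unfolding moment_def using eq by (rule integral_cong)
  show "(\<lambda>s. s ^ i / sqrt (T 0 s) * (sqrt s / sqrt (s - e))) integrable_on {\<alpha>..\<beta>}"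
    using moment_integrable[OF band \<open>e < c2\<close>] eq by (rule integrable_eq)
qed

lemma moment_zero_le_moment:
  assumes band: "(\<alpha>, \<beta>) \<in> {(c2, c3), (c4, c5)}" and "0 \<le> e" "e \<le> c2 / 2"
  shows "moment \<alpha> \<beta> i 0 \<le> moment \<alpha> \<beta> i e"
proof -
  have "e < c2" "0 < \<alpha>" "e \<le> \<alpha> / 2"
    using assms band_bounds[OF band] nodes_ordered by auto
  have "moment \<alpha> \<beta> i 0 = integral {\<alpha>..\<beta>} (\<lambda>s. s ^ i / sqrt (T 0 s))"
    by (simp add: moment_def)
  also have "\<dots> \<le> integral {\<alpha>..\<beta>} (\<lambda>s. s ^ i / sqrt (T 0 s) * (sqrt s / sqrt (s - e)))"
    using band nodes_ordered
    by (intro integral_mult_sqrt_shift_bounds(1) \<open>0 < \<alpha>\<close> \<open>0 \<le> e\<close> \<open>e \<le> \<alpha> / 2\<close> moment_integrable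
        moment_eq_shift_integral(2) \<open>e < c2\<close> moment_integrand_nonneg) auto
  also have "\<dots> = moment \<alpha> \<beta> i e"
    by (rule moment_eq_shift_integral(1)[OF band \<open>0 \<le> e\<close> \<open>e < c2\<close>, symmetric])
  finally show ?thesis .
qed

lemma tendsto_moment:
  assumes band: "(\<alpha>, \<beta>) \<in> {(c2, c3), (c4, c5)}"
  shows "((\<lambda>e. moment \<alpha> \<beta> i e) \<longlongrightarrow> moment \<alpha> \<beta> i 0) (at_right 0)"
proof -
  have "0 < \<alpha>"
    using band_bounds[OF band] nodes_ordered by auto
  have small: "\<forall>\<^sub>F e in at_right 0. 0 \<le> e \<and> e < c2"
    using nodes_ordered by (auto simp: eventually_at_right_field intro!: exI[of _ c2])
  have "((\<lambda>e. integral {\<alpha>..\<beta>} (\<lambda>s. s ^ i / sqrt (T 0 s) * (sqrt s / sqrt (s - e))))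
      \<longlongrightarrow> moment \<alpha> \<beta> i 0) (at_right 0)"
    unfolding moment_def
  proof (rule tendsto_integral_mult_sqrt_shift[OF \<open>0 < \<alpha>\<close>])
    show "(\<lambda>s. s ^ i / sqrt (T 0 s)) integrable_on {\<alpha>..\<beta>}"
      using moment_integrable[OF band] nodes_ordered by simp
    show "\<forall>\<^sub>F e in at_right 0. (\<lambda>s. s ^ i / sqrt (T 0 s) * (sqrt s / sqrt (s - e))) integrable_on {\<alpha>..\<beta>}"
      using small by eventually_elim (blast intro: moment_eq_shift_integral(2)[OF band])
    show "0 \<le> s ^ i / sqrt (T 0 s)" if "s \<in> {\<alpha>..\<beta>}" for s
      using moment_integrand_nonneg[OF band _ that] nodes_ordered by simp
  qed
  moreover have "\<forall>\<^sub>F e in at_right 0. integral {\<alpha>..\<beta>} (\<lambda>s. s ^ i / sqrt (T 0 s) * (sqrt s / sqrt (s - e)))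
      = moment \<alpha> \<beta> i e"
    using small by eventually_elim (blast intro: moment_eq_shift_integral(1)[OF band, symmetric])
  ultimately show ?thesis
    by (rule Lim_transform_eventually)
qed

lemma moment_determinant_pos:
  assumes "0 \<le> e" "e \<le> c2 / 2"
  shows "moment c2 c3 1 e * moment c4 c5 0 e < moment c2 c3 0 e * moment c4 c5 1 e"
proof -
  have band: "(c2, c3) \<in> {(c2, c3), (c4, c5)}" "(c4, c5) \<in> {(c2, c3), (c4, c5)}" and "e < c2"
    using assms nodes_ordered by auto
  have P0: "0 < moment c2 c3 0 e" and Q0: "0 < moment c4 c5 0 e"
    using moment_zero_pos[OF band(1)] moment_zero_le_moment[OF band(1) assms, of 0]
      moment_zero_pos[OF band(2)] moment_zero_le_moment[OF band(2) assms, of 0] by linarith+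
  have "moment c2 c3 1 e * moment c4 c5 0 e \<le> (c3 * moment c2 c3 0 e) * moment c4 c5 0 e"
    using moment_first_bounds(2)[OF band(1) \<open>e < c2\<close>] Q0 by (intro mult_right_mono) auto
  also have "\<dots> < moment c2 c3 0 e * (c4 * moment c4 c5 0 e)"
    using P0 Q0 nodes_ordered by simp
  also have "\<dots> \<le> moment c2 c3 0 e * moment c4 c5 1 e"
    using moment_first_bounds(1)[OF band(2) \<open>e < c2\<close>] P0 by (intro mult_left_mono) auto
  finally show ?thesis .
qed

lemma inner_moment_bigo:
  "(\<lambda>e. integral {0..e} (\<lambda>s. s ^ 1 / sqrt (T e s))) \<in> O[at_right 0](\<lambda>e. e powr (3/2))"
proof -
  define R where "R s = (c2 - s) * (c3 - s) * ((c4 - s) * (c5 - s))" for s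
  have T: "T e s = (e - s) * R s" for e s
    by (simp add: T_def R_def algebra_simps)
  have bound: "\<bar>integral {0..e} (\<lambda>s. s ^ 1 / sqrt (T e s))\<bar> \<le> 4 * (e / (c2 / 2)\<^sup>2) * sqrt (e - 0)"
    if "0 < e" "e \<le> c2 / 2" for e
  proof (rule integrable_dominated_by_inverse_sqrt_endpoints(2)[OF \<open>0 < e\<close>])
    have R: "((c2 / 2)\<^sup>2)\<^sup>2 \<le> R s" if "s \<in> {0<..<e}" for s
      using that \<open>e \<le> c2 / 2\<close> nodes_ordered
      unfolding R_def power2_eq_square by (intro mult_mono) auto
    then have "0 < T e s" if "s \<in> {0<..<e}" for s
      using that nodes_ordered by (auto simp: T intro!: mult_pos_pos order.strict_trans2[OF _ R])
    then have "\<forall>s\<in>{0<..<e}. sqrt (T e s) \<noteq> 0"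
      by force
    moreover have "continuous_on {0<..<e} (T e)"
      unfolding T_def by (intro continuous_intros)
    ultimately show "continuous_on {0<..<e} (\<lambda>s. s ^ 1 / sqrt (T e s))"
      by (intro continuous_intros) auto
    fix s assume s: "s \<in> {0<..<e}"
    have "(c2 / 2)\<^sup>2 * sqrt (e - s) \<le> sqrt (T e s)"
      using real_le_rsqrt[OF R[OF s]] s by (simp add: T real_sqrt_mult mult.commute)
    moreover have "0 < (c2 / 2)\<^sup>2 * sqrt (e - s)"
      using s nodes_ordered by simp
    ultimately have "\<bar>s ^ 1 / sqrt (T e s)\<bar> \<le> e / ((c2 / 2)\<^sup>2 * sqrt (e - s))"
      using s by (auto simp: abs_divide intro!: frac_le)
    also have "\<dots> = e / (c2 / 2)\<^sup>2 * (1 / sqrt (e - s))"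
      by simp
    also have "\<dots> \<le> e / (c2 / 2)\<^sup>2 * (1 / sqrt (s - 0) + 1 / sqrt (e - s))"
      using s by (intro mult_left_mono) auto
    finally show "\<bar>s ^ 1 / sqrt (T e s)\<bar> \<le> e / (c2 / 2)\<^sup>2 * (1 / sqrt (s - 0) + 1 / sqrt (e - s))" .
  qed
  show ?thesis
  proof (rule landau_o.bigI)
    show "0 < 4 / (c2 / 2)\<^sup>2"
      using nodes_ordered by simp
    have "\<forall>\<^sub>F e in at_right 0. 0 < e \<and> e \<le> c2 / 2"
      using nodes_ordered by (auto simp: eventually_at_right_field intro!: exI[of _ "c2 / 2"])
    then show "\<forall>\<^sub>F e in at_right 0. norm (integral {0..e} (\<lambda>s. s ^ 1 / sqrt (T e s)))
        \<le> 4 / (c2 / 2)\<^sup>2 * norm (e powr (3/2))"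
    proof eventually_elim
      case (elim e)
      have "e powr (3/2) = e powr (1 + 1/2)"
        by simp
      also have "\<dots> = e powr 1 * e powr (1/2)"
        by (rule powr_add)
      finally have "e powr (3/2) = e * sqrt e"
        using elim by (simp add: powr_half_sqrt)
      then show ?case
        using bound[of e] elim by (simp add: mult_ac)
    qed
  qed
qed

end

locale billiard_caustic =
  fixes a b c l :: real
  assumes semi_axes: "0 < c" "c < b" "b < a"
    and caustic: "l \<in> {c<..<b} \<union> {b<..<a}"
begin

sublocale billiard_nodes c "min b l" "max b l" a
  using semi_axes caustic by unfold_locales auto

lemma bands:
  "(c, min b l) \<in> {(c, min b l), (max b l, a)}" "(max b l, a) \<in> {(c, min b l), (max b l, a)}"
  by simp_all

lemma freq_nodes_eq:
  assumes "0 < x" "x < c"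
  shows "freq_nodes a b c x l = [0, x, c, min b l, max b l, a]"
  using assms semi_axes caustic by (cases "l < b") (auto simp: freq_nodes_def)

lemma freq_T_eq:
  assumes "0 < x" "x < c"
  shows "freq_T a b c x l s = T x s"
  unfolding freq_T_def freq_nodes_eq[OF assms] T_def
  by (simp add: numeral_eq_Suc atLeastAtMostSuc_conv mult_ac)

lemma freq_K_eq:
  assumes "0 < x" "x < c"
  shows "freq_K a b c x l 0 = (integral {0..x} (\<lambda>s. s ^ 0 / sqrt (T x s)), integral {0..x} (\<lambda>s. s ^ 1 / sqrt (T x s)))"
    and "freq_K a b c x l 1 = (moment c (min b l) 0 x, moment c (min b l) 1 x)"
    and "freq_K a b c x l 2 = (moment (max b l) a 0 x, moment (max b l) a 1 x)"
  unfolding freq_K_def Let_def freq_nodes_eq[OF assms] moment_def freq_T_eq[OF assms] by simp_all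

lemma freq_map_second_equation:
  assumes "0 < x" "x \<le> c / 2"
  shows "integral {0..x} (\<lambda>s. s ^ 1 / sqrt (T x s))
    = 2 * fst (freq_map a b c x l) * moment c (min b l) 1 x - 2 * snd (freq_map a b c x l) * moment (max b l) a 1 x"
proof -
  have "x < c"
    using assms semi_axes by simp
  note K = freq_K_eq[OF \<open>0 < x\<close> this]
  have "fst (freq_K a b c x l 1) * snd (freq_K a b c x l 2) - snd (freq_K a b c x l 1) * fst (freq_K a b c x l 2) \<noteq> 0"
    using moment_determinant_pos[of x] assms unfolding K by simp
  from linear_system_the_solution[OF this, of "freq_K a b c x l 0", folded freq_map_def]
  show ?thesis
    unfolding K by (simp add: prod_eq_iff)
qed

lemma eventually_freq_map_second_equation:
  "\<forall>\<^sub>F x in at_right 0. integral {0..x} (\<lambda>s. s ^ 1 / sqrt (T x s))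
    = 2 * fst (freq_map a b c x l) * moment c (min b l) 1 x - 2 * snd (freq_map a b c x l) * moment (max b l) a 1 x"
proof -
  have "\<forall>\<^sub>F x in at_right 0. 0 < x \<and> x \<le> c / 2"
    using semi_axes by (auto simp: eventually_at_right_field intro!: exI[of _ "c / 2"])
  then show ?thesis
    by eventually_elim (blast intro: freq_map_second_equation)
qed

lemma rhoG_eq_moment_ratio: "rhoG a b c l = moment c (min b l) 1 0 / moment (max b l) a 1 0"
proof -
  have "TG a b c l s = T 0 s" for s
    unfolding TG_def T_def by (cases "l < b") (auto simp: algebra_simps)
  then show ?thesis
    by (simp add: rhoG_def moment_def)
qed

end

theorem lemma2:
  fixes a b c :: real and \<kappa> :: "real \<Rightarrow> real \<times> real"
  assumes abc: "0 < c" "c < b" "b < a"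
    and \<kappa>_pos: "\<And>l. l \<in> {c<..<b} \<union> {b<..<a} \<Longrightarrow> fst (\<kappa> l) > 0 \<and> snd (\<kappa> l) > 0"
    and \<kappa>_asym1: "\<And>l. l \<in> {c<..<b} \<union> {b<..<a} \<Longrightarrow>
       (\<lambda>l1. fst (freq_map a b c l1 l) - fst (\<kappa> l) * l1 powr (1/2)) \<in> O[at_right 0](\<lambda>l1. l1 powr (3/2))"
    and \<kappa>_asym2: "\<And>l. l \<in> {c<..<b} \<union> {b<..<a} \<Longrightarrow>
       (\<lambda>l1. snd (freq_map a b c l1 l) - snd (\<kappa> l) * l1 powr (1/2)) \<in> O[at_right 0](\<lambda>l1. l1 powr (3/2))"
  shows "\<forall>l \<in> {c<..<b} \<union> {b<..<a}.
           rhoG a b c l = snd (\<kappa> l) / fst (\<kappa> l) \<and>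
           (\<lambda>l1. snd (freq_map a b c l1 l) / fst (freq_map a b c l1 l) - rhoG a b c l)
              \<in> O[at_right 0](\<lambda>l1. l1)"
proof
  fix l assume l: "l \<in> {c<..<b} \<union> {b<..<a}"
  interpret billiard_caustic a b c l
    using abc l by unfold_locales
  have "fst (\<kappa> l) * moment c (min b l) 1 0 = snd (\<kappa> l) * moment (max b l) a 1 0"
    using \<kappa>_asym1[OF l] \<kappa>_asym2[OF l] inner_moment_bigo tendsto_moment[OF bands(1)]
      tendsto_moment[OF bands(2)] eventually_freq_map_second_equation
    by (rule coefficient_relation_of_sqrt_expansions)
  then have "rhoG a b c l = snd (\<kappa> l) / fst (\<kappa> l)"
    using rhoG_eq_moment_ratio moment_one_zero_pos[OF bands(2)] \<kappa>_pos[OF l]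
    by (simp add: frac_eq_eq mult.commute)
  then show "rhoG a b c l = snd (\<kappa> l) / fst (\<kappa> l) \<and>
      (\<lambda>l1. snd (freq_map a b c l1 l) / fst (freq_map a b c l1 l) - rhoG a b c l) \<in> O[at_right 0](\<lambda>l1. l1)"
    using bigo_quotient_of_sqrt_expansions[OF \<kappa>_asym1[OF l] \<kappa>_asym2[OF l]] \<kappa>_pos[OF l] by simp
qed

end
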